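(* Let $q\ge2$, $\beta>0$, $u>0$, and let $\Phi_0:\mathbb Z_q\to[0,\infty)$ be even with $\Phi_0(0)=0$ and $\Phi_0(i)\ge u$ for all $i\neq0$. Let $Q_0$ be the symmetric $q\times q$ matrix $Q_0(i,j)=e^{-\beta\Phi_0(i-j)}/\sum_{k\in\mathbb Z_q}e^{-\beta\Phi_0(k)}$. Then every eigenvalue $\lambda$ of $Q_0$ satisfies $$\lambda\ \ge\ \frac{1-(q-1)e^{-\beta u}}{1+(q-1)e^{-\beta u}}.$$
   Context: $\mathbb Z_q=\{0,\dots,q-1\}$ with addition mod $q$. $Q_0$ is the normalized transfer matrix of a clock model with pair potential $u_{i,j}=\Phi_0(i-j)$. *)

theory Defs
  imports Complex_Main "Jordan_Normal_Form.Char_Poly"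
begin

(* Z_q is represented by {0..<q} (nat), with subtraction i - j computed as (i + q - j) mod q.
   Phi0 is only relevant on {0..<q}. *)
definition clock_Q0 :: "nat \<Rightarrow> real \<Rightarrow> (nat \<Rightarrow> real) \<Rightarrow> real mat" where
  "clock_Q0 q \<beta> \<Phi>0 =
     mat q q (\<lambda>(i, j). exp (- \<beta> * \<Phi>0 ((i + q - j) mod q)) / (\<Sum>k<q. exp (- \<beta> * \<Phi>0 k)))"

end

theory Submission
  imports Defs
begin

(* Q0 has nonnegative entries, its rows sum to 1 (each row is a cyclic shift of the
   Boltzmann weights) and its diagonal is constantly 1/Z, Z the normalising sum.  Every
   Gershgorin disc is therefore centred at 1/Z with radius 1 - 1/Z, so every eigenvalue is
   at least 2/Z - 1, and Z <= 1 + (q - 1) exp (- beta u). *)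

lemma eigenvalue_Gershgorin:
  fixes A :: "'a :: real_normed_field mat"
  assumes A: "A \<in> carrier_mat n n" and "eigenvalue A lam"
  obtains i where "i < n" "norm (lam - A $$ (i, i)) \<le> (\<Sum>j\<in>{..<n} - {i}. norm (A $$ (i, j)))"
proof -
  from assms obtain v where v: "v \<in> carrier_vec n" "v \<noteq> 0\<^sub>v n" "A *\<^sub>v v = lam \<cdot>\<^sub>v v"
    unfolding eigenvalue_def eigenvector_def by auto
  obtain j0 where j0: "j0 < n" "v $ j0 \<noteq> 0"
    using v(1,2) by (metis carrier_vecD eq_vecI index_zero_vec)
  define M where "M = Max ((\<lambda>j. norm (v $ j)) ` {..<n})"
  have "M \<in> (\<lambda>j. norm (v $ j)) ` {..<n}" unfolding M_def using j0 by (intro Max_in) auto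
  then obtain i where i: "i < n" "norm (v $ i) = M" by auto
  have max: "norm (v $ j) \<le> norm (v $ i)" if "j < n" for j
    using i that unfolding M_def by auto
  have vi: "norm (v $ i) > 0" using max[OF j0(1)] j0(2) by (metis norm_le_zero_iff not_less order_trans)
  have "(\<Sum>j<n. A $$ (i, j) * v $ j) = lam * v $ i"
    using arg_cong[OF v(3), of "\<lambda>w. w $ i"] i(1) A v(1)
    by (simp add: scalar_prod_def lessThan_atLeast0 mult.commute)
  then have "(lam - A $$ (i, i)) * v $ i = (\<Sum>j\<in>{..<n} - {i}. A $$ (i, j) * v $ j)"
    using i(1) by (simp add: sum.remove algebra_simps)
  then have "norm (lam - A $$ (i, i)) * norm (v $ i) = norm (\<Sum>j\<in>{..<n} - {i}. A $$ (i, j) * v $ j)"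
    by (metis norm_mult)
  also have "\<dots> \<le> (\<Sum>j\<in>{..<n} - {i}. norm (A $$ (i, j)) * norm (v $ j))"
    unfolding norm_mult[symmetric] by (rule norm_sum)
  also have "\<dots> \<le> (\<Sum>j\<in>{..<n} - {i}. norm (A $$ (i, j))) * norm (v $ i)"
    unfolding sum_distrib_right by (intro sum_mono mult_left_mono max) auto
  finally show ?thesis
    using that[OF i(1)] vi by simp
qed

lemma eigenvalue_stochastic_ge:
  fixes A :: "real mat"
  assumes A: "A \<in> carrier_mat n n" and ev: "eigenvalue A lam"
    and nonneg: "\<And>i j. i < n \<Longrightarrow> j < n \<Longrightarrow> A $$ (i, j) \<ge> 0"
    and rows: "\<And>i. i < n \<Longrightarrow> (\<Sum>j<n. A $$ (i, j)) = 1"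
    and diag: "\<And>i. i < n \<Longrightarrow> A $$ (i, i) \<ge> d"
  shows "lam \<ge> 2 * d - 1"
proof -
  obtain i where i: "i < n"
    and Gershgorin: "norm (lam - A $$ (i, i)) \<le> (\<Sum>j\<in>{..<n} - {i}. norm (A $$ (i, j)))"
    by (rule eigenvalue_Gershgorin[OF A ev])
  have "(\<Sum>j\<in>{..<n} - {i}. norm (A $$ (i, j))) = 1 - A $$ (i, i)"
    using rows[OF i] nonneg[OF i] i by (simp add: sum.remove)
  with Gershgorin diag[OF i] show ?thesis by auto
qed

lemma sum_cyclic_diff_reindex:
  fixes f :: "nat \<Rightarrow> 'a :: comm_monoid_add"
  assumes "i < q"
  shows "(\<Sum>j<q. f ((i + q - j) mod q)) = (\<Sum>k<q. f k)"
proof -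
  have involutive: "(i + q - (i + q - j) mod q) mod q = j" if "j < q" for j
  proof (cases "j \<le> i")
    case True
    then have "(i + q - j) mod q = i - j" using assms
      by (metis add_diff_assoc2 less_imp_diff_less mod_add_self2 mod_less)
    then show ?thesis using True assms by simp
  next
    case False
    then show ?thesis using assms that by simp
  qed
  show ?thesis
    by (rule sum.reindex_bij_witness[where i="\<lambda>k. (i + q - k) mod q" and j="\<lambda>k. (i + q - k) mod q"])
       (use involutive assms in auto)
qed

definition clock_partition :: "nat \<Rightarrow> real \<Rightarrow> (nat \<Rightarrow> real) \<Rightarrow> real" where
  "clock_partition q \<beta> \<Phi>0 = (\<Sum>k<q. exp (- \<beta> * \<Phi>0 k))"

lemma clock_partition_pos: "0 < q \<Longrightarrow> 0 < clock_partition q \<beta> \<Phi>0"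
  unfolding clock_partition_def by (intro sum_pos) auto

lemma clock_partition_le:
  assumes "0 < q" and "\<beta> \<ge> 0" and "\<And>k. 0 < k \<Longrightarrow> k < q \<Longrightarrow> \<Phi>0 k \<ge> u"
  shows "clock_partition q \<beta> \<Phi>0 \<le> exp (- \<beta> * \<Phi>0 0) + real (q - 1) * exp (- \<beta> * u)"
proof -
  have "{..<q} = insert 0 {1..<q}" using assms(1) by auto
  then have "clock_partition q \<beta> \<Phi>0 = exp (- \<beta> * \<Phi>0 0) + (\<Sum>k\<in>{1..<q}. exp (- \<beta> * \<Phi>0 k))"
    unfolding clock_partition_def by simp
  also have "\<dots> \<le> exp (- \<beta> * \<Phi>0 0) + (\<Sum>k\<in>{1..<q}. exp (- \<beta> * u))"
    using assms(2,3) by (intro add_left_mono sum_mono) (auto intro: mult_left_mono)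
  finally show ?thesis by simp
qed

lemma clock_Q0_carrier: "clock_Q0 q \<beta> \<Phi>0 \<in> carrier_mat q q"
  unfolding clock_Q0_def by simp

lemma clock_Q0_index:
  "i < q \<Longrightarrow> j < q \<Longrightarrow>
    clock_Q0 q \<beta> \<Phi>0 $$ (i, j) = exp (- \<beta> * \<Phi>0 ((i + q - j) mod q)) / clock_partition q \<beta> \<Phi>0"
  unfolding clock_Q0_def clock_partition_def by simp

lemma clock_Q0_nonneg: "i < q \<Longrightarrow> j < q \<Longrightarrow> clock_Q0 q \<beta> \<Phi>0 $$ (i, j) \<ge> 0"
  using clock_partition_pos[of q] by (simp add: clock_Q0_index less_imp_le)

lemma clock_Q0_row_sum:
  assumes "i < q"
  shows "(\<Sum>j<q. clock_Q0 q \<beta> \<Phi>0 $$ (i, j)) = 1"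
proof -
  have "(\<Sum>j<q. clock_Q0 q \<beta> \<Phi>0 $$ (i, j))
      = (\<Sum>j<q. exp (- \<beta> * \<Phi>0 ((i + q - j) mod q))) / clock_partition q \<beta> \<Phi>0"
    unfolding sum_divide_distrib by (intro sum.cong) (simp_all add: assms clock_Q0_index)
  also have "\<dots> = 1"
    using sum_cyclic_diff_reindex[OF assms, of "\<lambda>k. exp (- \<beta> * \<Phi>0 k)"]
      clock_partition_pos[of q \<beta> \<Phi>0] assms
    by (simp add: clock_partition_def)
  finally show ?thesis .
qed

lemma clock_Q0_diag:
  "i < q \<Longrightarrow> clock_Q0 q \<beta> \<Phi>0 $$ (i, i) = exp (- \<beta> * \<Phi>0 0) / clock_partition q \<beta> \<Phi>0"
  by (simp add: clock_Q0_index)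

theorem lemma4p5:
  fixes q :: nat and \<beta> u :: real and \<Phi>0 :: "nat \<Rightarrow> real" and lam :: real
  assumes "q \<ge> 2" and "\<beta> > 0" and "u > 0"
    and "\<And>i. i < q \<Longrightarrow> \<Phi>0 i \<ge> 0"
    and "\<And>i. i < q \<Longrightarrow> \<Phi>0 ((q - i) mod q) = \<Phi>0 i"
    and "\<Phi>0 0 = 0"
    and "\<And>i. 0 < i \<Longrightarrow> i < q \<Longrightarrow> \<Phi>0 i \<ge> u"
    and "eigenvalue (clock_Q0 q \<beta> \<Phi>0) lam"
  shows "lam \<ge> (1 - (q - 1) * exp (- \<beta> * u)) / (1 + (q - 1) * exp (- \<beta> * u))"
proof -
  define Z where "Z = clock_partition q \<beta> \<Phi>0"
  define s where "s = (q - 1) * exp (- \<beta> * u)"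
  have "Z > 0" unfolding Z_def using assms(1) by (intro clock_partition_pos) simp
  have "Z \<le> 1 + s"
    using clock_partition_le[of q \<beta> u \<Phi>0] assms(1,2,6,7) unfolding Z_def s_def by simp
  have "clock_Q0 q \<beta> \<Phi>0 $$ (i, i) = 1 / Z" if "i < q" for i
    using that by (simp add: clock_Q0_diag assms(6) Z_def)
  then have "lam \<ge> 2 * (1 / Z) - 1"
    using clock_Q0_carrier assms(8) clock_Q0_nonneg clock_Q0_row_sum
    by (intro eigenvalue_stochastic_ge[of _ q]) auto
  moreover have "2 / (1 + s) \<le> 2 / Z"
    using \<open>Z > 0\<close> \<open>Z \<le> 1 + s\<close> by (intro divide_left_mono) auto
  moreover have "(1 - s) / (1 + s) = 2 / (1 + s) - 1"
    using \<open>Z > 0\<close> \<open>Z \<le> 1 + s\<close> by (simp add: field_simps)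
  ultimately show ?thesis unfolding s_def by simp
qed

end
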